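(* Let $n\ge2$ and let $A=(a_{ij})$ be a real $n\times n$ matrix, and $q>0$. Then $$|A_q|=\frac{|(A^1_1)_q|\,|(A^n_n)_q|-q^{\,n-1}\,|(A^1_n)_q|\,|(A^n_1)_q|}{|(A^{1n}_{1n})_q|},$$ provided $|(A^{1n}_{1n})_q|\ne0$.
   Context: $|\cdot|$ denotes the determinant, and the determinant of the empty $0\times0$ matrix is $1$. For an $m\times m$ matrix $M=(m_{ij})$ and $q>0$, $M_q=(q^{(i-j)^2/2}m_{ij})_{i,j=1}^m$, where indices are always the positions $1,\dots,m$ in $M$. $A^i_j$ denotes the $(n-1)\times(n-1)$ matrix obtained from $A$ by deleting row $i$ and column $j$ (reindexed from $1$), and $A^{1n}_{1n}$ the $(n-2)\times(n-2)$ matrix obtained by deleting rows $1,n$ and columns $1,n$. *)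

theory Defs
  imports "Jordan_Normal_Form.Determinant"
begin

text \<open>The q-twisted matrix M_q = (q^((i-j)^2/2) m_ij). Indices are 0-based here,
  which does not matter since only the difference i-j enters.\<close>
definition q_mat :: "real \<Rightarrow> real mat \<Rightarrow> real mat" where
  "q_mat q M = mat (dim_row M) (dim_col M)
     (\<lambda>(i,j). q powr ((real i - real j)^2 / 2) * M $$ (i,j))"

end

theory Submission
  imports Defs "Jordan_Normal_Form.Char_Poly"
begin

text \<open>The formula is the Desnanot--Jacobi identity
  |M| |M(1n,1n)| = |M(1,1)| |M(n,n)| - |M(1,n)| |M(n,1)| for M = A_q. If |M| is nonzero it follows
  by multiplying M with the identity matrix whose first and last columns are replaced by those of
  the adjugate of M; in general one applies this to the characteristic matrix x I + M, whose
  determinant is monic, and evaluates at x = 0.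
  Deleting the first (or last) row together with the first (or last) column keeps all differences
  i - j, so these minors of A_q are the twists of the corresponding minors of A. Deleting row 1 and
  column n shifts i - j by one, and q^((i-j+1)^2/2) = q^(1/2) q^i q^(-j) q^((i-j)^2/2): up to a
  diagonal conjugation the minor is multiplied by q^((n-1)/2); the same happens for row n and
  column 1, which yields the factor q^(n-1).\<close>

lemma laplace_expansion_column_single:
  assumes A: "(A :: 'a :: comm_ring_1 mat) \<in> carrier_mat n n" and j: "j < n" and i: "i < n"
    and zero: "\<And>k. k < n \<Longrightarrow> k \<noteq> i \<Longrightarrow> A $$ (k,j) = 0"
  shows "det A = A $$ (i,j) * cofactor A i j"
proof -
  have "det A = (\<Sum>k<n. A $$ (k,j) * cofactor A k j)" by (rule laplace_expansion_column[OF A j])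
  also have "\<dots> = (\<Sum>k\<in>{i}. A $$ (k,j) * cofactor A k j)"
    by (rule sum.mono_neutral_right) (use i zero in auto)
  finally show ?thesis by simp
qed

lemma det_identity_inner_columns:
  fixes P :: "'a :: comm_ring_1 mat"
  assumes "P \<in> carrier_mat (Suc (Suc m)) (Suc (Suc m))"
    and "\<And>i j. i < Suc (Suc m) \<Longrightarrow> 0 < j \<Longrightarrow> j < Suc m \<Longrightarrow> P $$ (i,j) = of_bool (i = j)"
  shows "det P = P $$ (0,0) * P $$ (Suc m, Suc m) - P $$ (Suc m, 0) * P $$ (0, Suc m)"
  using assms
proof (induction m arbitrary: P)
  case 0
  have "det P = (\<Sum>k<2. P $$ (k,0) * cofactor P k 0)"
    by (rule laplace_expansion_column) (use 0 in auto)
  also have "\<dots> = P $$ (0,0) * cofactor P 0 0 + P $$ (1,0) * cofactor P 1 0"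
    by (simp add: numeral_2_eq_2)
  also have "cofactor P 0 0 = P $$ (1,1)"
    unfolding cofactor_def using 0(1)
    by (subst det_single[of "mat_delete P 0 0"]) (auto simp: mat_delete_def)
  also have "cofactor P 1 0 = - P $$ (0,1)"
    unfolding cofactor_def using 0(1)
    by (subst det_single[of "mat_delete P 1 0"]) (auto simp: mat_delete_def)
  finally show ?case by simp
next
  case (Suc m)
  have "det P = P $$ (1,1) * cofactor P 1 1"
    by (rule laplace_expansion_column_single[OF Suc.prems(1)]) (use Suc.prems(2) in auto)
  also have "\<dots> = det (mat_delete P 1 1)"
    using Suc.prems(2)[of 1 1] by (simp add: cofactor_def)
  also have "\<dots> = mat_delete P 1 1 $$ (0,0) * mat_delete P 1 1 $$ (Suc m, Suc m)
     - mat_delete P 1 1 $$ (Suc m, 0) * mat_delete P 1 1 $$ (0, Suc m)"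
  proof (rule Suc.IH)
    show "mat_delete P 1 1 \<in> carrier_mat (Suc (Suc m)) (Suc (Suc m))"
      using mat_delete_carrier[OF Suc.prems(1)] by simp
    fix i j assume "i < Suc (Suc m)" "0 < j" "j < Suc m"
    then show "mat_delete P 1 1 $$ (i,j) = of_bool (i = j)"
      using Suc.prems(1) Suc.prems(2)[of "if i < 1 then i else Suc i" "Suc j"]
      by (auto simp: mat_delete_def)
  qed
  also have "\<dots> = P $$ (0,0) * P $$ (Suc (Suc m), Suc (Suc m))
      - P $$ (Suc (Suc m), 0) * P $$ (0, Suc (Suc m))"
    using Suc.prems(1) by (simp add: mat_delete_def)
  finally show ?case .
qed

definition adj_corner_cols :: "'a :: comm_ring_1 mat \<Rightarrow> 'a mat" where
  "adj_corner_cols M = mat (dim_row M) (dim_row M) (\<lambda>(i,j).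
     if j = 0 \<or> j = dim_row M - 1 then adj_mat M $$ (i,j) else of_bool (i = j))"

lemma adj_corner_cols_carrier: "M \<in> carrier_mat n n \<Longrightarrow> adj_corner_cols M \<in> carrier_mat n n"
  by (simp add: adj_corner_cols_def)

lemma det_adj_corner_cols:
  fixes M :: "'a :: comm_ring_1 mat"
  assumes M: "M \<in> carrier_mat n n" and n: "n \<ge> 2"
  shows "det (adj_corner_cols M) = det (mat_delete M 0 0) * det (mat_delete M (n-1) (n-1))
    - det (mat_delete M 0 (n-1)) * det (mat_delete M (n-1) 0)"
proof -
  obtain m where nm: "n = Suc (Suc m)" using n by (metis add_2_eq_Suc le_Suc_ex)
  let ?N = "adj_corner_cols M"
  have entry: "i < n \<Longrightarrow> j < n \<Longrightarrow> ?N $$ (i,j) =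
      (if j = 0 \<or> j = n - 1 then cofactor M j i else of_bool (i = j))" for i j
    using M by (simp add: adj_corner_cols_def adj_mat_def)
  have "det ?N = ?N $$ (0,0) * ?N $$ (Suc m, Suc m) - ?N $$ (Suc m, 0) * ?N $$ (0, Suc m)"
    by (rule det_identity_inner_columns) (use M nm entry in \<open>auto simp: adj_corner_cols_carrier\<close>)
  also have "\<dots> = cofactor M 0 0 * cofactor M (n-1) (n-1) - cofactor M 0 (n-1) * cofactor M (n-1) 0"
    using nm entry by simp
  also have "\<dots> = det (mat_delete M 0 0) * det (mat_delete M (n-1) (n-1))
      - det (mat_delete M 0 (n-1)) * det (mat_delete M (n-1) 0)"
    by (simp add: cofactor_def algebra_simps minus_one_mult_self)
  finally show ?thesis .
qed

lemma mult_adj_corner_cols_index: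
  fixes M :: "'a :: comm_ring_1 mat"
  assumes M: "M \<in> carrier_mat n n" and ij: "i < n" "j < n"
  shows "(M * adj_corner_cols M) $$ (i,j) =
    (if j = 0 \<or> j = n - 1 then of_bool (i = j) * det M else M $$ (i,j))"
proof -
  let ?N = "adj_corner_cols M"
  have NC: "?N \<in> carrier_mat n n" using M by (rule adj_corner_cols_carrier)
  have prod: "(M * ?N) $$ (i,j) = row M i \<bullet> col ?N j" using M NC ij by auto
  show ?thesis
  proof (cases "j = 0 \<or> j = n - 1")
    case True
    then have "col ?N j = col (adj_mat M) j"
      using M ij adj_mat(1)[OF M] by (intro eq_vecI) (auto simp: adj_corner_cols_def)
    then have "(M * ?N) $$ (i,j) = (M * adj_mat M) $$ (i,j)" using prod M adj_mat(1)[OF M] ij by auto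
    also have "\<dots> = of_bool (i = j) * det M" unfolding adj_mat(2)[OF M] using ij by auto
    finally show ?thesis using True by simp
  next
    case False
    have "row M i \<bullet> col ?N j = (\<Sum>k\<in>{0..<n}. M $$ (i,k) * ?N $$ (k,j))"
      unfolding scalar_prod_def using M NC ij by auto
    also have "\<dots> = (\<Sum>k\<in>{j}. M $$ (i,k) * ?N $$ (k,j))"
      by (rule sum.mono_neutral_right) (use M ij False in \<open>auto simp: adj_corner_cols_def\<close>)
    also have "\<dots> = M $$ (i,j)" using M ij False by (simp add: adj_corner_cols_def)
    finally show ?thesis using prod False by simp
  qed
qed

lemma det_mult_adj_corner_cols:
  fixes M :: "'a :: comm_ring_1 mat"
  assumes M: "M \<in> carrier_mat n n" and n: "n \<ge> 2"
  shows "det (M * adj_corner_cols M) = det M * (det M * det (mat_delete (mat_delete M (n-1) (n-1)) 0 0))"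
proof -
  obtain m where nm: "n = Suc (Suc m)" using n by (metis add_2_eq_Suc le_Suc_ex)
  define P where "P = M * adj_corner_cols M"
  have PC: "P \<in> carrier_mat n n" unfolding P_def using M adj_corner_cols_carrier[OF M] by auto
  note Pent = mult_adj_corner_cols_index[OF M, folded P_def]
  define Q where "Q = mat_delete P 0 0"
  have QC: "Q \<in> carrier_mat (Suc m) (Suc m)"
    unfolding Q_def using mat_delete_carrier[OF PC] nm by auto
  have Qent: "i < Suc m \<Longrightarrow> j < Suc m \<Longrightarrow> Q $$ (i,j) = P $$ (Suc i, Suc j)" for i j
    unfolding Q_def mat_delete_def using PC nm by auto
  have "det P = P $$ (0,0) * cofactor P 0 0"
    by (rule laplace_expansion_column_single[OF PC]) (use nm Pent in auto)
  also have "\<dots> = det M * det Q" using nm Pent by (simp add: cofactor_def Q_def)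
  also have "det Q = Q $$ (m,m) * cofactor Q m m"
    by (rule laplace_expansion_column_single[OF QC]) (use nm Pent Qent in auto)
  also have "\<dots> = det M * det (mat_delete Q m m)"
    using nm Pent Qent by (simp add: cofactor_def flip: mult_2)
  also have "mat_delete Q m m = mat_delete (mat_delete M (n-1) (n-1)) 0 0"
    by (rule eq_matI) (use QC M nm Qent Pent in \<open>auto simp: mat_delete_def\<close>)
  finally show ?thesis unfolding P_def .
qed

lemma desnanot_jacobi_of_det_nonzero:
  fixes M :: "'a :: idom mat"
  assumes M: "M \<in> carrier_mat n n" and n: "n \<ge> 2" and "det M \<noteq> 0"
  shows "det M * det (mat_delete (mat_delete M (n-1) (n-1)) 0 0) =
    det (mat_delete M 0 0) * det (mat_delete M (n-1) (n-1))
    - det (mat_delete M 0 (n-1)) * det (mat_delete M (n-1) 0)"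
proof -
  have "det M * det (adj_corner_cols M) = det M * (det M * det (mat_delete (mat_delete M (n-1) (n-1)) 0 0))"
    using det_mult_adj_corner_cols[OF M n] by (simp only: det_mult[OF M adj_corner_cols_carrier[OF M]])
  then have "det (adj_corner_cols M) = det M * det (mat_delete (mat_delete M (n-1) (n-1)) 0 0)"
    using \<open>det M \<noteq> 0\<close> by simp
  then show ?thesis by (simp add: det_adj_corner_cols[OF M n])
qed

lemma map_mat_delete: "map_mat f (mat_delete A i j) = mat_delete (map_mat f A) i j"
  by (rule eq_matI) (auto simp: mat_delete_def)

lemma desnanot_jacobi:
  fixes M :: "'a :: idom mat"
  assumes M: "M \<in> carrier_mat n n" and n: "n \<ge> 2"
  shows "det M * det (mat_delete (mat_delete M (n-1) (n-1)) 0 0) =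
    det (mat_delete M 0 0) * det (mat_delete M (n-1) (n-1))
    - det (mat_delete M 0 (n-1)) * det (mat_delete M (n-1) 0)"
proof -
  define X where "X = char_poly_matrix (- M)"
  have XC: "X \<in> carrier_mat n n" unfolding X_def using M by simp
  have "coeff (det X) n = 1"
    using degree_monic_char_poly[of "- M" n] M unfolding X_def char_poly_def by auto
  then have "det X \<noteq> 0" by auto
  note identity = desnanot_jacobi_of_det_nonzero[OF XC n this]
  have eval: "comm_ring_hom (\<lambda>p :: 'a poly. poly p 0)" by unfold_locales auto
  have eval_X: "map_mat (\<lambda>p. poly p 0) X = M"
    by (rule eq_matI) (use M in \<open>auto simp: X_def char_poly_matrix_def\<close>)
  from arg_cong[OF identity, of "\<lambda>p. poly p 0"] show ?thesis
    by (simp only: poly_mult poly_diff flip: comm_ring_hom.hom_det[OF eval] map_mat_delete eval_X)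
qed

lemma det_diagonal_conjugate:
  fixes X Y :: "'a :: field mat"
  assumes X: "X \<in> carrier_mat m m" and Y: "Y \<in> carrier_mat m m"
    and f: "\<And>i. i < m \<Longrightarrow> f i \<noteq> 0"
    and entries: "\<And>i j. i < m \<Longrightarrow> j < m \<Longrightarrow> X $$ (i,j) = c * f i / f j * Y $$ (i,j)"
  shows "det X = c ^ m * det Y"
proof -
  have summand: "signof p * (\<Prod>i = 0..<m. X $$ (i, p i)) = c ^ m * (signof p * (\<Prod>i = 0..<m. Y $$ (i, p i)))"
    if p: "p permutes {0..<m}" for p
  proof -
    have p_less: "i < m \<Longrightarrow> p i < m" for i using permutes_in_image[OF p] by auto
    have "(\<Prod>i = 0..<m. X $$ (i, p i)) = (\<Prod>i = 0..<m. c * f i / f (p i) * Y $$ (i, p i))"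
      by (rule prod.cong[OF refl]) (auto simp: entries p_less)
    also have "\<dots> = c ^ m * (\<Prod>i = 0..<m. f i) / (\<Prod>i = 0..<m. f (p i)) * (\<Prod>i = 0..<m. Y $$ (i, p i))"
      by (simp add: prod.distrib prod_dividef)
    also have "(\<Prod>i = 0..<m. f (p i)) = (\<Prod>i = 0..<m. f i)"
      using prod.permute[OF p, of f] by (simp add: comp_def)
    finally show ?thesis using f by (simp add: prod_zero_iff)
  qed
  show ?thesis
    unfolding det_def'[OF X] det_def'[OF Y] sum_distrib_left
    by (rule sum.cong[OF refl]) (rule summand, simp)
qed

lemma q_mat_index [simp]:
  "i < dim_row M \<Longrightarrow> j < dim_col M \<Longrightarrow> q_mat q M $$ (i,j) = q powr ((real i - real j)^2 / 2) * M $$ (i,j)"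
  and q_mat_dim [simp]: "dim_row (q_mat q M) = dim_row M" "dim_col (q_mat q M) = dim_col M"
  by (simp_all add: q_mat_def)

lemma q_mat_carrier: "A \<in> carrier_mat m n \<Longrightarrow> q_mat q A \<in> carrier_mat m n"
  unfolding q_mat_def by auto

lemma q_mat_delete_first: "q_mat q (mat_delete A 0 0) = mat_delete (q_mat q A) 0 0"
  by (rule eq_matI) (auto simp: mat_delete_def)

lemma q_mat_delete_last:
  "A \<in> carrier_mat n n \<Longrightarrow> q_mat q (mat_delete A (n-1) (n-1)) = mat_delete (q_mat q A) (n-1) (n-1)"
  by (rule eq_matI) (auto simp: mat_delete_def)

lemma det_twist_shift:
  fixes q s :: real and a :: "nat \<Rightarrow> nat \<Rightarrow> real"
  assumes q: "q > 0"
  shows "det (mat m m (\<lambda>(i,j). q powr ((real i - real j + s)^2 / 2) * a i j)) =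
    (q powr (s^2 / 2)) ^ m * det (mat m m (\<lambda>(i,j). q powr ((real i - real j)^2 / 2) * a i j))"
proof (rule det_diagonal_conjugate[where f = "\<lambda>i. q powr (s * real i)"])
  fix i j :: nat
  have "(real i - real j + s)^2 / 2 = s^2 / 2 + s * real i - s * real j + (real i - real j)^2 / 2"
    by (simp add: power2_eq_square field_simps)
  then have twist: "q powr ((real i - real j + s)^2 / 2) =
      q powr (s^2 / 2) * q powr (s * real i) / q powr (s * real j) * q powr ((real i - real j)^2 / 2)"
    by (simp only: powr_add powr_diff)
  show "mat m m (\<lambda>(i,j). q powr ((real i - real j + s)^2 / 2) * a i j) $$ (i,j) =
    q powr (s^2 / 2) * q powr (s * real i) / q powr (s * real j) *
    mat m m (\<lambda>(i,j). q powr ((real i - real j)^2 / 2) * a i j) $$ (i,j)" if "i < m" "j < m"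
    using that by (simp add: twist)
qed (use q in auto)

lemma det_delete_q_mat_first_last:
  fixes A :: "real mat"
  assumes A: "A \<in> carrier_mat n n" and q: "q > 0"
  shows "det (mat_delete (q_mat q A) 0 (n-1)) = sqrt q ^ (n-1) * det (q_mat q (mat_delete A 0 (n-1)))"
proof -
  have "mat_delete (q_mat q A) 0 (n-1) =
      mat (n-1) (n-1) (\<lambda>(i,j). q powr ((real i - real j + 1)^2 / 2) * mat_delete A 0 (n-1) $$ (i,j))"
    by (rule eq_matI) (use A in \<open>auto simp: mat_delete_def algebra_simps\<close>)
  moreover have "q_mat q (mat_delete A 0 (n-1)) =
      mat (n-1) (n-1) (\<lambda>(i,j). q powr ((real i - real j)^2 / 2) * mat_delete A 0 (n-1) $$ (i,j))"
    using A by (simp add: q_mat_def)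
  ultimately show ?thesis using det_twist_shift[OF q, of "n-1" 1] q by (simp add: powr_half_sqrt)
qed

lemma det_delete_q_mat_last_first:
  fixes A :: "real mat"
  assumes A: "A \<in> carrier_mat n n" and q: "q > 0"
  shows "det (mat_delete (q_mat q A) (n-1) 0) = sqrt q ^ (n-1) * det (q_mat q (mat_delete A (n-1) 0))"
proof -
  have "mat_delete (q_mat q A) (n-1) 0 =
      mat (n-1) (n-1) (\<lambda>(i,j). q powr ((real i - real j + -1)^2 / 2) * mat_delete A (n-1) 0 $$ (i,j))"
    by (rule eq_matI) (use A in \<open>auto simp: mat_delete_def algebra_simps\<close>)
  moreover have "q_mat q (mat_delete A (n-1) 0) =
      mat (n-1) (n-1) (\<lambda>(i,j). q powr ((real i - real j)^2 / 2) * mat_delete A (n-1) 0 $$ (i,j))"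
    using A by (simp add: q_mat_def)
  ultimately show ?thesis using det_twist_shift[OF q, of "n-1" "-1"] q by (simp add: powr_half_sqrt)
qed

theorem mainTheorem15:
  fixes A :: "real mat" and n :: nat and q :: real
  assumes "n \<ge> 2" and "A \<in> carrier_mat n n" and "q > 0"
    and "det (q_mat q (mat_delete (mat_delete A (n-1) (n-1)) 0 0)) \<noteq> 0"
  shows "det (q_mat q A) =
    (det (q_mat q (mat_delete A 0 0)) * det (q_mat q (mat_delete A (n-1) (n-1)))
     - q ^ (n - 1) * det (q_mat q (mat_delete A 0 (n-1))) * det (q_mat q (mat_delete A (n-1) 0)))
    / det (q_mat q (mat_delete (mat_delete A (n-1) (n-1)) 0 0))"
proof -
  note n = assms(1) and A = assms(2) and q = assms(3)
  have inner: "q_mat q (mat_delete (mat_delete A (n-1) (n-1)) 0 0)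
      = mat_delete (mat_delete (q_mat q A) (n-1) (n-1)) 0 0"
    by (simp only: q_mat_delete_first q_mat_delete_last[OF A])
  have sqrt_q: "sqrt q ^ (n-1) * sqrt q ^ (n-1) = q ^ (n-1)"
    using q by (simp flip: power_mult_distrib)
  have corners: "det (mat_delete (q_mat q A) 0 (n-1)) * det (mat_delete (q_mat q A) (n-1) 0)
      = q ^ (n-1) * det (q_mat q (mat_delete A 0 (n-1))) * det (q_mat q (mat_delete A (n-1) 0))"
    unfolding det_delete_q_mat_first_last[OF A q] det_delete_q_mat_last_first[OF A q] sqrt_q[symmetric]
    by (simp only: mult_ac)
  have "det (q_mat q A) * det (q_mat q (mat_delete (mat_delete A (n-1) (n-1)) 0 0)) =
      det (q_mat q (mat_delete A 0 0)) * det (q_mat q (mat_delete A (n-1) (n-1)))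
      - q ^ (n - 1) * det (q_mat q (mat_delete A 0 (n-1))) * det (q_mat q (mat_delete A (n-1) 0))"
    using desnanot_jacobi[OF q_mat_carrier[OF A, of q] n]
    by (simp only: inner q_mat_delete_first q_mat_delete_last[OF A] corners)
  with assms(4) show ?thesis by (simp add: eq_divide_eq)
qed

end
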